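(* Let $\Pi$ be the node-edge-checkable problem encoding $(\text{edge-degree}+1)$-edge coloring defined below, and $\Pi^*$ its node-list variant. Then for every valid input instance $(S,h_{\mathrm{in}})$ of $\Pi^*$ (on any finite semi-graph $S$), $\Pi^*$ admits a valid solution.
   Context: Semi-graph: a bipartite graph $S=(A\sqcup B,C)$ with every $b\in B$ of degree at most $2$; $A$ = nodes, $B$ = edges, $C$ = half-edges (incident node–edge pairs); degree of a node / rank of an edge = its degree in $S$. Node-edge-checkable problem $\Pi=(\Sigma,\mathcal N_\Pi,\mathcal E_\Pi)$: $\mathcal N_\Pi^i$ ($i\ge 0$) and $\mathcal E_\Pi^i$ ($i\in\{0,1,2\}$) are collections of cardinality-$i$ multisets over $\Sigma$. The problem $\Pi$: $\Sigma=\{(x,y): x,y\in\mathbb Z_{>0}\}\cup\{D\}$. For each $i\ge0$, $\mathcal N_\Pi^i$ consists of all cardinality-$i$ multisets of the form $\{(a_1,b_1),\dots,(a_p,b_p),D,\dots,D\}$ (with $i-p$ copies of $D$, $0\le p\le i$) such that $a_k\le p$ for all $k\le p$ and $b_l\ne b_m$ for all $l\ne m$. $\mathcal E_\Pi^0=\{\emptyset\}$, $\mathcal E_\Pi^1=\{\{D\}\}$, $\mathcal E_\Pi^2=\{\{(a_1,b),(a_2,b)\}: a_1,a_2,b\in\mathbb Z_{>0},\ a_1+a_2\ge b+1\}$. Node-list variant $\Pi^*$: for $i,j\ge0$ and $\psi\in\mathcal N_\Pi^j$, $\mathcal N^i_{\Pi,\psi}$ is the set of cardinality-$i$ multisets $\chi$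 over $\Sigma$ with $\chi\uplus\psi\in\mathcal N_\Pi^{i+j}$, and $\mathcal L^i=\{\mathcal N^i_{\Pi,\psi}:\psi\in\mathcal N_\Pi^j\text{ for some }j\ge0\}$. A valid input instance is $(S,h_{\mathrm{in}})$ with $h_{\mathrm{in}}(v)\in\mathcal L^{\deg(v)}$ for each node $v$. A valid solution is $h_{\mathrm{out}}:H(S)\to\Sigma$ such that for each node $v$ the multiset of labels on its incident half-edges lies in $h_{\mathrm{in}}(v)$, and for each edge $e$ the multiset of labels on its incident half-edges lies in $\mathcal E_\Pi^{\mathrm{rank}(e)}$. *)

theory Defs
  imports Main "HOL-Library.Multiset"
begin

datatype sigma = Pr nat nat | D

definition in_Sigma :: "sigma \<Rightarrow> bool" where
  "in_Sigma s = (case s of Pr x y \<Rightarrow> x > 0 \<and> y > 0 | D \<Rightarrow> True)"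

definition mset_over_Sigma :: "sigma multiset \<Rightarrow> bool" where
  "mset_over_Sigma M = (\<forall>s\<in>#M. in_Sigma s)"

definition node_constr :: "nat \<Rightarrow> sigma multiset set" where
  "node_constr i = {M. \<exists>xs :: (nat \<times> nat) list.
      length xs \<le> i \<and>
      M = mset (map (\<lambda>(a,b). Pr a b) xs) + replicate_mset (i - length xs) D \<and>
      (\<forall>(a,b)\<in>set xs. 0 < a \<and> 0 < b) \<and>
      (\<forall>(a,b)\<in>set xs. a \<le> length xs) \<and>
      distinct (map snd xs)}"

definition edge_constr :: "nat \<Rightarrow> sigma multiset set" where
  "edge_constr i =
     (if i = 0 then {{#}}
      else if i = 1 then {{#D#}}
      else if i = 2 then {{#Pr a1 b, Pr a2 b#} | a1 a2 b.
                           0 < a1 \<and> 0 < a2 \<and> 0 < b \<and> a1 + a2 \<ge> b + 1}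
      else {})"

definition list_constr :: "nat \<Rightarrow> sigma multiset \<Rightarrow> sigma multiset set" where
  "list_constr i \<psi> = {\<chi>. size \<chi> = i \<and> mset_over_Sigma \<chi> \<and>
                          \<chi> + \<psi> \<in> node_constr (i + size \<psi>)}"

definition list_family :: "nat \<Rightarrow> sigma multiset set set" where
  "list_family i = {list_constr i \<psi> | \<psi> j. \<psi> \<in> node_constr j}"

text \<open>Semi-graphs: nodes A, edges B, half-edges C \<subseteq> A \<times> B; edges have degree \<le> 2.\<close>
definition semi_graph :: "'a set \<Rightarrow> 'b set \<Rightarrow> ('a \<times> 'b) set \<Rightarrow> bool" where
  "semi_graph A B C = (finite A \<and> finite B \<and> C \<subseteq> A \<times> B \<and>
                       (\<forall>e\<in>B. card {v. (v,e) \<in> C} \<le> 2))"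

definition node_deg :: "('a \<times> 'b) set \<Rightarrow> 'a \<Rightarrow> nat" where
  "node_deg C v = card {e. (v,e) \<in> C}"

definition edge_rank :: "('a \<times> 'b) set \<Rightarrow> 'b \<Rightarrow> nat" where
  "edge_rank C e = card {v. (v,e) \<in> C}"

definition node_labels :: "('a \<times> 'b) set \<Rightarrow> ('a \<times> 'b \<Rightarrow> sigma) \<Rightarrow> 'a \<Rightarrow> sigma multiset" where
  "node_labels C h v = image_mset (\<lambda>e. h (v,e)) (mset_set {e. (v,e) \<in> C})"

definition edge_labels :: "('a \<times> 'b) set \<Rightarrow> ('a \<times> 'b \<Rightarrow> sigma) \<Rightarrow> 'b \<Rightarrow> sigma multiset" where
  "edge_labels C h e = image_mset (\<lambda>v. h (v,e)) (mset_set {v. (v,e) \<in> C})"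

definition valid_input :: "'a set \<Rightarrow> 'b set \<Rightarrow> ('a \<times> 'b) set \<Rightarrow> ('a \<Rightarrow> sigma multiset set) \<Rightarrow> bool" where
  "valid_input A B C hin = (\<forall>v\<in>A. hin v \<in> list_family (node_deg C v))"

definition valid_solution :: "'a set \<Rightarrow> 'b set \<Rightarrow> ('a \<times> 'b) set \<Rightarrow> ('a \<Rightarrow> sigma multiset set)
                               \<Rightarrow> ('a \<times> 'b \<Rightarrow> sigma) \<Rightarrow> bool" where
  "valid_solution A B C hin hout =
     ((\<forall>c\<in>C. in_Sigma (hout c)) \<and>
      (\<forall>v\<in>A. node_labels C hout v \<in> hin v) \<and>
      (\<forall>e\<in>B. edge_labels C hout e \<in> edge_constr (edge_rank C e)))"

end

theory Submission
  imports Defs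
begin

(* A node v whose input word has pairs xs labels each of its d_v edges of rank 2 with
   (p_v, c), where p_v = |xs| + d_v, and its other edges with D.  The node constraint then only
   asks the colours c at v to be positive, distinct and to avoid the second coordinates of xs,
   and the edge constraint of an edge {u,v} becomes c < p_u + p_v.  Of the p_u + p_v - 1
   candidate colours at most |xs_u| + |xs_v| are forbidden by the input words, which leaves
   d_u + d_v - 1 colours for only d_u + d_v - 2 adjacent edges, so a greedy list edge colouring
   exists. *)

lemma greedy_list_colouring:
  fixes F :: "'b set" and L :: "'b \<Rightarrow> 'c set" and adj :: "'b \<Rightarrow> 'b \<Rightarrow> bool"
  assumes "finite F"
    and adj_sym: "\<And>e e'. adj e e' \<Longrightarrow> adj e' e"
    and "\<And>e. e \<in> F \<Longrightarrow> card {e'\<in>F. e' \<noteq> e \<and> adj e e'} < card (L e)"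
  shows "\<exists>col. (\<forall>e\<in>F. col e \<in> L e) \<and> (\<forall>e\<in>F. \<forall>e'\<in>F. e \<noteq> e' \<longrightarrow> adj e e' \<longrightarrow> col e \<noteq> col e')"
  using assms(1,3)
proof (induction F rule: finite_induct)
  case empty
  show ?case by simp
next
  case (insert e F)
  have "card {e'\<in>F. e' \<noteq> x \<and> adj x e'} < card (L x)" if "x \<in> F" for x
  proof -
    have "card {e'\<in>F. e' \<noteq> x \<and> adj x e'} \<le> card {e'\<in>insert e F. e' \<noteq> x \<and> adj x e'}"
      by (rule card_mono) (use insert.hyps(1) in auto)
    also have "\<dots> < card (L x)" using insert.prems that by blast
    finally show ?thesis .
  qed
  with insert.IH obtain col where
    col_L: "\<forall>x\<in>F. col x \<in> L x" and
    col_proper: "\<forall>x\<in>F. \<forall>x'\<in>F. x \<noteq> x' \<longrightarrow> adj x x' \<longrightarrow> col x \<noteq> col x'"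
    by blast
  define N where "N = {e'\<in>F. adj e e'}"
  have "N = {e'\<in>insert e F. e' \<noteq> e \<and> adj e e'}"
    using insert.hyps(2) unfolding N_def by auto
  then have "card (col ` N) < card (L e)"
    using insert.prems card_image_le[of N col] insert.hyps(1) unfolding N_def by fastforce
  then have "\<not> L e \<subseteq> col ` N"
    using insert.hyps(1) card_mono[of "col ` N" "L e"] unfolding N_def by fastforce
  then obtain c where c: "c \<in> L e" "c \<notin> col ` N" by blast
  have "(col(e := c)) x \<noteq> (col(e := c)) x'"
    if "x \<in> insert e F" "x' \<in> insert e F" "x \<noteq> x'" "adj x x'" for x x'
    using that adj_sym[OF that(4)] col_proper c(2) insert.hyps(2) unfolding N_def by auto
  then show ?case
    using col_L c(1) by (intro exI[of _ "col(e := c)"]) auto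
qed

definition node_word :: "nat \<Rightarrow> (nat \<times> nat) list \<Rightarrow> sigma multiset" where
  "node_word i xs = mset (map (\<lambda>(a,b). Pr a b) xs) + replicate_mset (i - length xs) D"

definition admissible_pairs :: "(nat \<times> nat) list \<Rightarrow> bool" where
  "admissible_pairs xs \<longleftrightarrow>
     (\<forall>(a,b)\<in>set xs. 0 < a \<and> 0 < b \<and> a \<le> length xs) \<and> distinct (map snd xs)"

lemma node_constr_iff:
  "M \<in> node_constr i \<longleftrightarrow> (\<exists>xs. length xs \<le> i \<and> admissible_pairs xs \<and> M = node_word i xs)"
  unfolding node_constr_def node_word_def admissible_pairs_def by fast

lemma size_node_word [simp]: "length xs \<le> i \<Longrightarrow> size (node_word i xs) = i"
  by (simp add: node_word_def)

lemma node_constr_over_Sigma: "M \<in> node_constr i \<Longrightarrow> mset_over_Sigma M"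
  unfolding node_constr_iff node_word_def admissible_pairs_def mset_over_Sigma_def
  by (auto simp: in_Sigma_def split: if_splits; fastforce)

lemma list_constrI:
  assumes "\<chi> + \<psi> \<in> node_constr (size \<chi> + size \<psi>)"
  shows "\<chi> \<in> list_constr (size \<chi>) \<psi>"
  using node_constr_over_Sigma[OF assms] unfolding list_constr_def mset_over_Sigma_def
  by (simp add: assms)

lemma node_word_extend:
  assumes "admissible_pairs xs" and "length xs \<le> j"
    and "distinct cs" and "\<forall>c\<in>set cs. 0 < c" and "set cs \<inter> snd ` set xs = {}"
  shows "mset (map (Pr (length xs + length cs)) cs) + replicate_mset r D + node_word j xs
           \<in> node_constr (length cs + r + j)"
proof -
  define ys where "ys = xs @ map (Pair (length xs + length cs)) cs"
  have "admissible_pairs ys"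
    using assms(1,3-5) unfolding admissible_pairs_def ys_def by (auto simp: comp_def)
  moreover have "length ys \<le> length cs + r + j" using assms(2) by (simp add: ys_def)
  moreover have "replicate_mset (r + (j - length xs)) D = replicate_mset r D + replicate_mset (j - length xs) D"
    by (induction r) simp_all
  then have "mset (map (Pr (length xs + length cs)) cs) + replicate_mset r D + node_word j xs
               = node_word (length cs + r + j) ys"
    using assms(2) by (simp add: node_word_def ys_def comp_def add_ac)
  ultimately show ?thesis unfolding node_constr_iff by blast
qed

lemma pair_labels_in_edge_constr:
  assumes "0 < a1" "0 < a2" "0 < b" "b < a1 + a2"
  shows "{#Pr a1 b, Pr a2 b#} \<in> edge_constr 2"
  using assms unfolding edge_constr_def by simp (metis Suc_leI)

definition ends :: "('a \<times> 'b) set \<Rightarrow> 'b \<Rightarrow> 'a set" where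
  "ends C e = {v. (v,e) \<in> C}"

definition full_edges :: "('a \<times> 'b) set \<Rightarrow> 'a \<Rightarrow> 'b set" where
  "full_edges C v = {e. (v,e) \<in> C \<and> edge_rank C e = 2}"

definition pair_bound :: "('a \<times> 'b) set \<Rightarrow> ('a \<Rightarrow> (nat \<times> nat) list) \<Rightarrow> 'a \<Rightarrow> nat" where
  "pair_bound C X v = length (X v) + card (full_edges C v)"

(* The edge constraint a1 + a2 \<ge> b + 1 of a rank-2 edge bounds its colour by the sum of
   pair_bound over its ends; the node constraints at the ends forbid the second coordinates of
   their input words. *)
definition colour_list :: "('a \<times> 'b) set \<Rightarrow> ('a \<Rightarrow> (nat \<times> nat) list) \<Rightarrow> 'b \<Rightarrow> nat set" where
  "colour_list C X e =
     {0<..<(\<Sum>w\<in>ends C e. pair_bound C X w)} - (\<Union>w\<in>ends C e. snd ` set (X w))"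

definition colour_labelling ::
    "('a \<times> 'b) set \<Rightarrow> ('a \<Rightarrow> (nat \<times> nat) list) \<Rightarrow> ('b \<Rightarrow> nat) \<Rightarrow> 'a \<times> 'b \<Rightarrow> sigma" where
  "colour_labelling C X col =
     (\<lambda>(v,e). if edge_rank C e = 2 then Pr (pair_bound C X v) (col e) else D)"

lemma edge_rank_ends: "edge_rank C e = card (ends C e)"
  by (simp add: edge_rank_def ends_def)

lemma finite_ends: "finite C \<Longrightarrow> finite (ends C e)"
  unfolding ends_def by (rule finite_subset[of _ "fst ` C"]) force+

lemma finite_incident_edges: "finite C \<Longrightarrow> finite {e. (v,e) \<in> C}"
  by (rule finite_subset[of _ "snd ` C"]) force+

lemma finite_full_edges: "finite C \<Longrightarrow> finite (full_edges C v)"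
  unfolding full_edges_def using finite_incident_edges by (rule finite_subset[rotated]) auto

lemma ends_eq_pair:
  assumes "edge_rank C e = 2"
  obtains u v where "u \<noteq> v" "ends C e = {u,v}"
  using assms unfolding edge_rank_ends by (meson card_2_iff)

lemma full_edges_of_ends: "edge_rank C e = 2 \<Longrightarrow> w \<in> ends C e \<Longrightarrow> e \<in> full_edges C w"
  by (simp add: ends_def full_edges_def)

lemma card_colour_list:
  assumes "ends C e = {u,v}" "u \<noteq> v"
  shows "card (full_edges C u) + card (full_edges C v) - 1 \<le> card (colour_list C X e)"
proof -
  have "card (snd ` set (X w)) \<le> length (X w)" for w
    using card_image_le[of "set (X w)" snd] card_length[of "X w"] by simp
  then have "card (snd ` set (X u) \<union> snd ` set (X v)) \<le> length (X u) + length (X v)"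
    by (meson add_mono card_Un_le le_trans)
  moreover have "colour_list C X e =
      {0<..<pair_bound C X u + pair_bound C X v} - (snd ` set (X u) \<union> snd ` set (X v))"
    using assms by (simp add: colour_list_def)
  ultimately show ?thesis
    using diff_card_le_card_Diff[of "snd ` set (X u) \<union> snd ` set (X v)"
        "{0<..<pair_bound C X u + pair_bound C X v}"]
    by (simp add: pair_bound_def)
qed

definition adjacent :: "('a \<times> 'b) set \<Rightarrow> 'b \<Rightarrow> 'b \<Rightarrow> bool" where
  "adjacent C e e' \<longleftrightarrow> (\<exists>w. (w,e) \<in> C \<and> (w,e') \<in> C)"

lemma card_adjacent_full_edges:
  assumes "finite C" "edge_rank C e = 2" "ends C e = {u,v}"
  shows "card {e'. edge_rank C e' = 2 \<and> e' \<noteq> e \<and> adjacent C e e'}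
           < card (full_edges C u) + card (full_edges C v) - 1"
proof -
  have e_full: "e \<in> full_edges C u" "e \<in> full_edges C v"
    using full_edges_of_ends[OF assms(2)] assms(3) by auto
  have fin: "finite (full_edges C u)" "finite (full_edges C v)"
    using finite_full_edges[OF assms(1)] by auto
  have "{e'. edge_rank C e' = 2 \<and> e' \<noteq> e \<and> adjacent C e e'}
          \<subseteq> (full_edges C u - {e}) \<union> (full_edges C v - {e})"
  proof
    fix e' assume "e' \<in> {e'. edge_rank C e' = 2 \<and> e' \<noteq> e \<and> adjacent C e e'}"
    then obtain w where "(w,e) \<in> C" "(w,e') \<in> C" "e' \<noteq> e" "edge_rank C e' = 2"
      unfolding adjacent_def by blast
    moreover have "w = u \<or> w = v"
      using \<open>(w,e) \<in> C\<close> assms(3) unfolding ends_def by blast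
    ultimately show "e' \<in> (full_edges C u - {e}) \<union> (full_edges C v - {e})"
      unfolding full_edges_def by blast
  qed
  then have "card {e'. edge_rank C e' = 2 \<and> e' \<noteq> e \<and> adjacent C e e'}
               \<le> card (full_edges C u - {e}) + card (full_edges C v - {e})"
    using fin by (meson card_Un_le card_mono finite_Diff finite_UnI le_trans)
  moreover have "0 < card (full_edges C u)" "0 < card (full_edges C v)"
    using e_full fin card_gt_0_iff by blast+
  ultimately show ?thesis using e_full fin by (simp add: card_Diff_singleton)
qed

lemma good_colouring_exists:
  assumes "finite C"
  shows "\<exists>col. (\<forall>e. edge_rank C e = 2 \<longrightarrow> col e \<in> colour_list C X e) \<and>
               (\<forall>v. inj_on col (full_edges C v))"
proof -
  define F where "F = {e. edge_rank C e = 2}"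
  have "F \<subseteq> snd ` C"
  proof
    fix e assume "e \<in> F"
    then have "edge_rank C e = 2" by (simp add: F_def)
    then obtain u v where "ends C e = {u,v}" by (rule ends_eq_pair)
    then have "(u,e) \<in> C" unfolding ends_def by blast
    then show "e \<in> snd ` C" by force
  qed
  then have "finite F" using assms finite_subset by blast
  have adjacent_sym: "adjacent C e e' \<Longrightarrow> adjacent C e' e" for e e'
    unfolding adjacent_def by blast
  have few_neighbours: "card {e'\<in>F. e' \<noteq> e \<and> adjacent C e e'} < card (colour_list C X e)"
    if "e \<in> F" for e
  proof -
    have rank: "edge_rank C e = 2" using that by (simp add: F_def)
    obtain u v where uv: "u \<noteq> v" "ends C e = {u,v}" using ends_eq_pair[OF rank] by blast
    show ?thesis
      using card_adjacent_full_edges[OF assms rank uv(2)] card_colour_list[OF uv(2,1), of X]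
      by (simp add: F_def)
  qed
  obtain col where
    in_list: "\<forall>e\<in>F. col e \<in> colour_list C X e" and
    proper: "\<forall>e\<in>F. \<forall>e'\<in>F. e \<noteq> e' \<longrightarrow> adjacent C e e' \<longrightarrow> col e \<noteq> col e'"
    using greedy_list_colouring[OF \<open>finite F\<close> adjacent_sym few_neighbours] by blast
  have "inj_on col (full_edges C v)" for v
  proof (rule inj_onI)
    fix e e' assume "e \<in> full_edges C v" "e' \<in> full_edges C v" "col e = col e'"
    moreover from this have "e \<in> F" "e' \<in> F" "adjacent C e e'"
      unfolding full_edges_def F_def adjacent_def by auto
    ultimately show "e = e'" using proper by blast
  qed
  with in_list show ?thesis by (auto simp: F_def)
qed

lemma node_labels_colour_labelling:
  assumes "finite C" "set l = full_edges C v" "distinct l"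
  shows "node_labels C (colour_labelling C X col) v =
           mset (map (Pr (pair_bound C X v)) (map col l)) + replicate_mset (node_deg C v - length l) D"
proof -
  define h where "h = (\<lambda>e. colour_labelling C X col (v,e))"
  define I where "I = {e. (v,e) \<in> C}"
  define R where "R = I - full_edges C v"
  have "finite R" using finite_incident_edges[OF assms(1)] by (simp add: R_def I_def)
  have full_I: "full_edges C v \<subseteq> I" unfolding I_def full_edges_def by blast
  have "I = full_edges C v \<union> R" "full_edges C v \<inter> R = {}"
    using full_I by (auto simp: R_def)
  then have "mset_set I = mset_set (full_edges C v) + mset_set R"
    using mset_set_Union \<open>finite R\<close> finite_full_edges[OF assms(1)] by metis
  also have "mset_set (full_edges C v) = mset l"
    using assms(2,3) by (metis mset_set_set)
  finally have "image_mset h (mset_set I) = mset (map h l) + image_mset h (mset_set R)"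
    by simp
  also have "map h l = map (Pr (pair_bound C X v)) (map col l)"
    using assms(2) by (auto simp: h_def colour_labelling_def full_edges_def)
  also have "image_mset h (mset_set R) = image_mset (\<lambda>_. D) (mset_set R)"
    by (rule image_mset_cong) (use \<open>finite R\<close> in \<open>auto simp: h_def R_def I_def full_edges_def colour_labelling_def\<close>)
  also have "\<dots> = replicate_mset (node_deg C v - length l) D"
    using card_Diff_subset[OF finite_full_edges[OF assms(1)] full_I] distinct_card[OF assms(3)] assms(2)
    by (simp add: image_mset_const_eq R_def I_def node_deg_def)
  finally show ?thesis unfolding node_labels_def h_def I_def .
qed

lemma colour_labelling_node_valid:
  assumes "finite C" "admissible_pairs (X v)" "length (X v) \<le> j"
    and "inj_on col (full_edges C v)" "\<forall>e\<in>full_edges C v. col e \<in> colour_list C X e"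
  shows "node_labels C (colour_labelling C X col) v \<in> list_constr (node_deg C v) (node_word j (X v))"
proof -
  obtain l where l: "set l = full_edges C v" "distinct l"
    using finite_distinct_list[OF finite_full_edges[OF assms(1)]] by blast
  define cs where "cs = map col l"
  define \<chi> where "\<chi> = node_labels C (colour_labelling C X col) v"
  have "distinct cs" using l assms(4) by (simp add: cs_def distinct_map)
  moreover have "\<forall>c\<in>set cs. 0 < c" and "set cs \<inter> snd ` set (X v) = {}"
    using assms(5) l(1) unfolding cs_def colour_list_def full_edges_def ends_def by auto
  moreover have "length l \<le> node_deg C v"
    using card_mono[OF finite_incident_edges[OF assms(1)], of "full_edges C v" v]
      distinct_card[OF l(2)] l(1)
    unfolding node_deg_def full_edges_def by auto
  moreover have "pair_bound C X v = length (X v) + length cs"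
    using distinct_card[OF l(2)] l(1) by (simp add: pair_bound_def cs_def)
  ultimately have "\<chi> + node_word j (X v) \<in> node_constr (node_deg C v + j)"
    using node_word_extend[OF assms(2,3), of cs "node_deg C v - length cs"]
      node_labels_colour_labelling[OF assms(1) l, of X col]
    by (simp add: \<chi>_def cs_def)
  moreover have "size \<chi> = node_deg C v" by (simp add: \<chi>_def node_labels_def node_deg_def)
  moreover have "size (node_word j (X v)) = j" using assms(3) by simp
  ultimately have "\<chi> \<in> list_constr (size \<chi>) (node_word j (X v))"
    by (intro list_constrI) simp
  then show ?thesis using \<open>size \<chi> = node_deg C v\<close> by (simp add: \<chi>_def)
qed

lemma colour_labelling_edge_valid:
  assumes "finite C" "edge_rank C e \<le> 2" "edge_rank C e = 2 \<Longrightarrow> col e \<in> colour_list C X e"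
  shows "edge_labels C (colour_labelling C X col) e \<in> edge_constr (edge_rank C e)"
proof -
  have labels: "edge_labels C h e = image_mset (\<lambda>v. h (v,e)) (mset_set (ends C e))" for h
    by (simp add: edge_labels_def ends_def)
  consider "edge_rank C e = 0" | "edge_rank C e = 1" | "edge_rank C e = 2"
    using assms(2) by linarith
  then show ?thesis
  proof cases
    case 1
    then have "ends C e = {}" using finite_ends[OF assms(1)] by (simp add: edge_rank_ends)
    then show ?thesis using 1 by (simp add: labels edge_constr_def)
  next
    case 2
    then obtain u where "ends C e = {u}" by (auto simp: edge_rank_ends card_1_singleton_iff)
    then show ?thesis using 2 by (simp add: labels edge_constr_def colour_labelling_def)
  next
    case 3
    obtain u v where uv: "u \<noteq> v" "ends C e = {u,v}" using ends_eq_pair[OF 3] by blast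
    have "0 < pair_bound C X w" if "w \<in> ends C e" for w
      using full_edges_of_ends[OF 3 that] finite_full_edges[OF assms(1)] card_gt_0_iff
      by (fastforce simp: pair_bound_def)
    moreover have "0 < col e" "col e < pair_bound C X u + pair_bound C X v"
      using assms(3)[OF 3] uv by (auto simp: colour_list_def)
    moreover have "edge_labels C (colour_labelling C X col) e =
        {#Pr (pair_bound C X u) (col e), Pr (pair_bound C X v) (col e)#}"
      using uv 3 by (simp add: labels colour_labelling_def)
    ultimately show ?thesis using pair_labels_in_edge_constr uv(2) 3 by simp
  qed
qed

lemma valid_input_node_words:
  assumes "valid_input A B C hin"
  shows "\<exists>J X. \<forall>v\<in>A. admissible_pairs (X v) \<and> length (X v) \<le> J v \<and>
                     hin v = list_constr (node_deg C v) (node_word (J v) (X v))"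
proof -
  have "\<exists>j xs. admissible_pairs xs \<and> length xs \<le> j \<and>
               hin v = list_constr (node_deg C v) (node_word j xs)" if "v \<in> A" for v
    using assms that unfolding valid_input_def list_family_def node_constr_iff by blast
  then show ?thesis by metis
qed

lemma label_in_node_labels:
  assumes "finite C" "(v,e) \<in> C"
  shows "h (v,e) \<in># node_labels C h v"
  using finite_incident_edges[OF assms(1)] assms(2) by (simp add: node_labels_def)

theorem mainTheorem9:
  fixes A :: "'a set" and B :: "'b set" and C :: "('a \<times> 'b) set"
    and hin :: "'a \<Rightarrow> sigma multiset set"
  assumes "semi_graph A B C"
    and "valid_input A B C hin"
  shows "\<exists>hout. valid_solution A B C hin hout"
proof -
  have "finite C" and C_sub: "C \<subseteq> A \<times> B" and rank: "\<forall>e\<in>B. edge_rank C e \<le> 2"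
    using assms(1) finite_subset[of C "A \<times> B"] unfolding semi_graph_def edge_rank_def by auto
  obtain J X where X: "\<forall>v\<in>A. admissible_pairs (X v) \<and> length (X v) \<le> J v \<and>
                              hin v = list_constr (node_deg C v) (node_word (J v) (X v))"
    using valid_input_node_words[OF assms(2)] by blast
  obtain col where col_list: "\<forall>e. edge_rank C e = 2 \<longrightarrow> col e \<in> colour_list C X e"
    and col_inj: "\<forall>v. inj_on col (full_edges C v)"
    using good_colouring_exists[OF \<open>finite C\<close>] by blast
  define hout where "hout = colour_labelling C X col"
  have nodes: "node_labels C hout v \<in> hin v" if "v \<in> A" for v
    using X that col_inj col_list colour_labelling_node_valid[OF \<open>finite C\<close>, of X v "J v" col]
    by (simp add: hout_def full_edges_def)
  have "in_Sigma (hout (v,e))" if "(v,e) \<in> C" for v e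
    using nodes[of v] X C_sub that label_in_node_labels[OF \<open>finite C\<close> that]
    unfolding list_constr_def mset_over_Sigma_def by blast
  moreover have "edge_labels C hout e \<in> edge_constr (edge_rank C e)" if "e \<in> B" for e
    using colour_labelling_edge_valid[OF \<open>finite C\<close>] rank that col_list by (simp add: hout_def)
  ultimately show ?thesis unfolding valid_solution_def using nodes by (intro exI[of _ hout]) auto
qed

end
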